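(* Consider the stochastic MPC scheme described in the context: the system $x(k+1)=Ax(k)+Bu(k)+w(k)$ under the control law $u(k)=Ke_0(k)+v_0^*(k)$ resulting from problem $(\mathcal{P}_k)$ (assumed feasible at the time steps considered), with nominal update $z_0(k)=z_1(k-1)$, $z(0)=x(0)$. Then, conditioned on $x(0)$, the predicted error at time $k$ has the same distribution as the closed-loop error, i.e. $e_i(k)\overset{d}{=}e(k+i)$ for $0\le i\le N$, where $e(k)=x(k)-z(k)$ with $z(k)=z_0(k)$.
   Context: System: $x(k+1)=Ax(k)+Bu(k)+w(k)$ with $x(k)\in\mathbb{R}^{n_x}$, $u(k)\in\mathbb{R}^{n_u}$, over a finite horizon $\bar N$; the disturbance sequence $W=[w(0)^\top,\dots,w(\bar N)^\top]^\top$ is a random vector with distribution $\mathcal{D}^W$ (not necessarily i.i.d. or zero mean). $\mathcal{X},\mathcal{U}$ convex sets; $\mathcal{A}\ominus\mathcal{B}=\{a\in\mathcal{A}: a+b\in\mathcal{A}\ \forall b\in\mathcal{B}\}$. A fixed gain $K$ is given; $\mathcal{R}^x_k,\mathcal{R}^u_k$ ($0\le k\le\bar N$) are given sets (probabilistic reachable sets used for tightening) and $\mathcal{Z}_f$ a terminal set. Problem $(\mathcal{P}_k)$ at time $k$: minimize over $v_0,\dots,v_{N-1}$ the cost $\mathbb{E}_{W_k}\big(l_f(x_N)+\sum_{i=0}^{N-1}l_{k+i}(x_i,u_i)\big)$ subject to $x_i=z_i+e_i$, $u_i=Ke_i+v_i$, $z_{i+1}=Az_i+Bv_i$, $e_{i+1}=(A+BK)e_i+w_i$,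 where $W_k=[w_0^\top,\dots,w_N^\top]^\top$ has the conditional distribution of $[w(k)^\top,\dots,w(k+N)^\top]^\top$ given the realized $[w(0)^\top,\dots,w(k-1)^\top]^\top$; constraints $z_i\in\mathcal{X}\ominus\mathcal{R}^x_{i+k}$, $v_i\in\mathcal{U}\ominus\mathcal{R}^u_{i+k}$ ($i=0,\dots,N-1$), $z_N\in\mathcal{Z}_f$; initialization $x_0=x(k)$, $z_0=z_1(k-1)$ (with $z_0(0)=x(0)$), $e_0=x_0-z_0$. Subscript quantities with argument $(k)$, e.g. $e_i(k)$, denote the predicted quantities in problem $(\mathcal{P}_k)$. The applied input is $u(k)=Ke_0(k)+v_0^*(k)$ with $v^*(k)$ optimal for $(\mathcal{P}_k)$. *)

theory Defs
  imports "HOL-Probability.Probability"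
begin

definition pdiff :: "'v::plus set \<Rightarrow> 'v set \<Rightarrow> 'v set" where
  "pdiff S T = {a \<in> S. \<forall>b\<in>T. a + b \<in> S}"

fun zpred :: "real^'n^'n \<Rightarrow> real^'m^'n \<Rightarrow> real^'n \<Rightarrow> (nat \<Rightarrow> real^'m) \<Rightarrow> nat \<Rightarrow> real^'n" where
  "zpred A B z0 v 0 = z0"
| "zpred A B z0 v (Suc i) = A *v zpred A B z0 v i + B *v v i"

fun epred :: "real^'n^'n \<Rightarrow> real^'m^'n \<Rightarrow> real^'n^'m \<Rightarrow> real^'n \<Rightarrow> (nat \<Rightarrow> real^'n) \<Rightarrow> nat \<Rightarrow> real^'n" where
  "epred A B K e0 Wk 0 = e0"
| "epred A B K e0 Wk (Suc i) = (A + B ** K) *v epred A B K e0 Wk i + Wk i"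

definition mpc_feasible ::
  "real^'n^'n \<Rightarrow> real^'m^'n \<Rightarrow> (real^'n) set \<Rightarrow> (real^'m) set \<Rightarrow>
   (nat \<Rightarrow> (real^'n) set) \<Rightarrow> (nat \<Rightarrow> (real^'m) set) \<Rightarrow> (real^'n) set \<Rightarrow>
   nat \<Rightarrow> nat \<Rightarrow> real^'n \<Rightarrow> (nat \<Rightarrow> real^'m) \<Rightarrow> bool" where
  "mpc_feasible A B X U Rx Ru Zf N k z0 v \<longleftrightarrow>
     (\<forall>i<N. zpred A B z0 v i \<in> pdiff X (Rx (i + k)) \<and> v i \<in> pdiff U (Ru (i + k)))
     \<and> zpred A B z0 v N \<in> Zf"

definition mpc_cost ::
  "real^'n^'n \<Rightarrow> real^'m^'n \<Rightarrow> real^'n^'m \<Rightarrow> (real^'n \<Rightarrow> real) \<Rightarrow>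
   (nat \<Rightarrow> real^'n \<Rightarrow> real^'m \<Rightarrow> real) \<Rightarrow> nat \<Rightarrow> nat \<Rightarrow> (nat \<Rightarrow> real^'n) measure \<Rightarrow>
   real^'n \<Rightarrow> real^'n \<Rightarrow> (nat \<Rightarrow> real^'m) \<Rightarrow> real" where
  "mpc_cost A B K lf l N k Q x0 z0 v =
     (\<integral>Wk. lf (zpred A B z0 v N + epred A B K (x0 - z0) Wk N)
          + (\<Sum>i<N. l (k + i) (zpred A B z0 v i + epred A B K (x0 - z0) Wk i)
                               (K *v epred A B K (x0 - z0) Wk i + v i)) \<partial>Q)"

definition mpc_optimal ::
  "real^'n^'n \<Rightarrow> real^'m^'n \<Rightarrow> real^'n^'m \<Rightarrow> (real^'n) set \<Rightarrow> (real^'m) set \<Rightarrow>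
   (nat \<Rightarrow> (real^'n) set) \<Rightarrow> (nat \<Rightarrow> (real^'m) set) \<Rightarrow> (real^'n) set \<Rightarrow>
   (real^'n \<Rightarrow> real) \<Rightarrow> (nat \<Rightarrow> real^'n \<Rightarrow> real^'m \<Rightarrow> real) \<Rightarrow>
   nat \<Rightarrow> nat \<Rightarrow> (nat \<Rightarrow> real^'n) measure \<Rightarrow> real^'n \<Rightarrow> real^'n \<Rightarrow> (nat \<Rightarrow> real^'m) \<Rightarrow> bool" where
  "mpc_optimal A B K X U Rx Ru Zf lf l N k Q x0 z0 v \<longleftrightarrow>
     mpc_feasible A B X U Rx Ru Zf N k z0 v \<and>
     (\<forall>v'. mpc_feasible A B X U Rx Ru Zf N k z0 v' \<longrightarrow>
        mpc_cost A B K lf l N k Q x0 z0 v \<le> mpc_cost A B K lf l N k Q x0 z0 v')"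

end

theory Submission
  imports Defs
begin

text \<open>The closed-loop error e = x - z obeys e(j+1) = (A + B K) e(j) + w(j), e(0) = 0, whatever
  inputs v are applied. Hence e(k + i)
  is a measurable function g of the past disturbances w(0..k-1) and of w(k..k+i-1), and the
  predicted error e_i(k) is the same function with w(k..k+i-1) replaced by W_k. Since the
  law of W_k is the conditional law of the future disturbances given the past, pushing the
  joint law of (past, future) forward along g gives the claim.\<close>

lemma borel_measurable_matrix_vector_mult [measurable (raw)]:
  fixes C :: "real^'n^'m"
  assumes "f \<in> borel_measurable S"
  shows "(\<lambda>s. C *v f s) \<in> borel_measurable S"
  by (rule borel_measurable_continuous_on[OF _ assms]) (intro continuous_intros)

lemma borel_measurable_epred:
  fixes A :: "real^'n^'n" and B :: "real^'m^'n" and K :: "real^'n^'m"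
  assumes "e0 \<in> borel_measurable S"
    and "\<And>j. j < i \<Longrightarrow> (\<lambda>s. Wk s j) \<in> borel_measurable S"
  shows "(\<lambda>s. epred A B K (e0 s) (Wk s) i) \<in> borel_measurable S"
  using assms(2) by (induction i) (simp_all add: assms(1))

lemma epred_cong:
  "(\<And>j. j < i \<Longrightarrow> Wk j = Wk' j) \<Longrightarrow> epred A B K e0 Wk i = epred A B K e0 Wk' i"
  by (induction i) auto

lemma epred_restrict [simp]:
  "{..<i} \<subseteq> S \<Longrightarrow> epred A B K e0 (restrict Wk S) i = epred A B K e0 Wk i"
  by (rule epred_cong) auto

lemma epred_add:
  "epred A B K e0 Wk (k + i) = epred A B K (epred A B K e0 Wk k) (\<lambda>j. Wk (k + j)) i"
  by (induction i) auto

lemma closed_loop_error_eq_epred: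
  fixes A :: "real^'n^'n" and B :: "real^'m^'n" and K :: "real^'n^'m"
    and x z w :: "nat \<Rightarrow> real^'n" and v :: "nat \<Rightarrow> real^'m"
  assumes "x 0 = z 0"
    and "\<And>j. j < n \<Longrightarrow>
       x (Suc j) = A *v x j + B *v (K *v (x j - z j) + v j) + w j
       \<and> z (Suc j) = A *v z j + B *v v j"
    and "j \<le> n"
  shows "x j - z j = epred A B K 0 w j"
  using \<open>j \<le> n\<close>
proof (induction j)
  case 0
  then show ?case using assms(1) by simp
next
  case (Suc j)
  with assms(2)[of j] show ?case
    by (simp add: algebra_simps matrix_vector_mult_diff_distrib matrix_vector_mul_assoc
        matrix_vector_mult_add_rdistrib)
qed

lemma distr_eq_bind_kernel:
  assumes "space M \<noteq> {}"
    and a: "a \<in> measurable M P" and b: "b \<in> measurable M Q"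
    and \<kappa>: "\<kappa> \<in> measurable P (subprob_algebra Q)"
    and joint: "distr M (P \<Otimes>\<^sub>M Q) (\<lambda>\<omega>. (a \<omega>, b \<omega>))
      = distr M P a \<bind> (\<lambda>p. distr (\<kappa> p) (P \<Otimes>\<^sub>M Q) (Pair p))"
    and g: "g \<in> measurable (P \<Otimes>\<^sub>M Q) R"
  shows "distr M R (\<lambda>\<omega>. g (a \<omega>, b \<omega>)) = M \<bind> (\<lambda>\<omega>. distr (\<kappa> (a \<omega>)) R (\<lambda>q. g (a \<omega>, q)))"
proof -
  have ab: "(\<lambda>\<omega>. (a \<omega>, b \<omega>)) \<in> measurable M (P \<Otimes>\<^sub>M Q)"
    using a b by measurable
  have pair_kernel: "(\<lambda>p. distr (\<kappa> p) (P \<Otimes>\<^sub>M Q) (Pair p))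
      \<in> measurable (distr M P a) (subprob_algebra (P \<Otimes>\<^sub>M Q))"
    by (simp add: measurable_distr2[OF _ \<kappa>])
  have g_kernel: "(\<lambda>p. distr (\<kappa> p) R (\<lambda>q. g (p, q))) \<in> measurable P (subprob_algebra R)"
    by (rule measurable_distr2[OF _ \<kappa>]) (simp add: g)
  have "space (distr M P a) \<noteq> {}"
    using \<open>space M \<noteq> {}\<close> measurable_space[OF a] by auto
  have "distr M R (\<lambda>\<omega>. g (a \<omega>, b \<omega>)) = distr (distr M (P \<Otimes>\<^sub>M Q) (\<lambda>\<omega>. (a \<omega>, b \<omega>))) R g"
    by (rule distr_distr[OF g ab, symmetric, unfolded comp_def])
  also have "\<dots> = distr M P a \<bind> (\<lambda>p. distr (distr (\<kappa> p) (P \<Otimes>\<^sub>M Q) (Pair p)) R g)"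
    unfolding joint by (rule distr_bind[OF pair_kernel \<open>space (distr M P a) \<noteq> {}\<close> g])
  also have "\<dots> = distr M P a \<bind> (\<lambda>p. distr (\<kappa> p) R (\<lambda>q. g (p, q)))"
  proof (rule bind_cong[OF refl])
    fix p assume "p \<in> space (distr M P a)"
    then have p: "p \<in> space P" by simp
    have "\<kappa> p \<in> space (subprob_algebra Q)"
      using \<kappa> p by (rule measurable_space)
    then have sets_\<kappa>: "sets (\<kappa> p) = sets Q"
      by (simp add: space_subprob_algebra)
    have "Pair p \<in> measurable (\<kappa> p) (P \<Otimes>\<^sub>M Q)"
      using p by (simp add: measurable_cong_sets[OF sets_\<kappa> refl])
    then show "distr (distr (\<kappa> p) (P \<Otimes>\<^sub>M Q) (Pair p)) R g = distr (\<kappa> p) R (\<lambda>q. g (p, q))"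
      by (subst distr_distr[OF g]) (simp_all add: comp_def)
  qed
  also have "\<dots> = M \<bind> (\<lambda>\<omega>. distr (\<kappa> (a \<omega>)) R (\<lambda>q. g (a \<omega>, q)))"
    by (rule bind_distr[OF a g_kernel \<open>space M \<noteq> {}\<close>])
  finally show ?thesis .
qed

theorem lemma1:
  fixes A :: "real^'n^'n" and B :: "real^'m^'n" and K :: "real^'n^'m"
    and M :: "'a measure"
    and W :: "'a \<Rightarrow> nat \<Rightarrow> real^'n"
    and \<kappa> :: "nat \<Rightarrow> (nat \<Rightarrow> real^'n) \<Rightarrow> (nat \<Rightarrow> real^'n) measure"
    and x z :: "'a \<Rightarrow> nat \<Rightarrow> real^'n"
    and vs :: "'a \<Rightarrow> nat \<Rightarrow> nat \<Rightarrow> real^'m"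
    and x0 :: "real^'n"
    and X Zf :: "(real^'n) set" and U :: "(real^'m) set"
    and Rx :: "nat \<Rightarrow> (real^'n) set" and Ru :: "nat \<Rightarrow> (real^'m) set"
    and lf :: "real^'n \<Rightarrow> real" and l :: "nat \<Rightarrow> real^'n \<Rightarrow> real^'m \<Rightarrow> real"
    and N Nbar :: nat
  assumes "prob_space M"
    and W_meas: "\<And>j. (\<lambda>\<omega>. W \<omega> j) \<in> borel_measurable M"
    and kernel: "\<And>k. k + N \<le> Nbar \<Longrightarrow>
       \<kappa> k \<in> measurable (PiM {..<k} (\<lambda>_. borel)) (prob_algebra (PiM {..N} (\<lambda>_. borel)))"
    and cond_distr: "\<And>k. k + N \<le> Nbar \<Longrightarrow>
       distr M (PiM {..<k} (\<lambda>_. borel) \<Otimes>\<^sub>M PiM {..N} (\<lambda>_. borel))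
         (\<lambda>\<omega>. (restrict (W \<omega>) {..<k}, restrict (\<lambda>i. W \<omega> (k + i)) {..N}))
       = distr M (PiM {..<k} (\<lambda>_. borel)) (\<lambda>\<omega>. restrict (W \<omega>) {..<k}) \<bind>
           (\<lambda>p. distr (\<kappa> k p) (PiM {..<k} (\<lambda>_. borel) \<Otimes>\<^sub>M PiM {..N} (\<lambda>_. borel))
                   (\<lambda>Wk. (p, Wk)))"
    and "convex X" and "convex U"
    and init: "\<And>\<omega>. \<omega> \<in> space M \<Longrightarrow> x \<omega> 0 = x0 \<and> z \<omega> 0 = x0"
    and dyn: "\<And>\<omega> j. \<omega> \<in> space M \<Longrightarrow> j < Nbar \<Longrightarrow>
       x \<omega> (Suc j) = A *v x \<omega> j + B *v (K *v (x \<omega> j - z \<omega> j) + vs \<omega> j 0) + W \<omega> j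
       \<and> z \<omega> (Suc j) = A *v z \<omega> j + B *v vs \<omega> j 0"
    and opt: "\<And>\<omega> k. \<omega> \<in> space M \<Longrightarrow> k + N \<le> Nbar \<Longrightarrow>
       mpc_optimal A B K X U Rx Ru Zf lf l N k (\<kappa> k (restrict (W \<omega>) {..<k}))
         (x \<omega> k) (z \<omega> k) (vs \<omega> k)"
    and "k + N \<le> Nbar" and "i \<le> N"
  shows "distr M borel (\<lambda>\<omega>. x \<omega> (k + i) - z \<omega> (k + i))
       = M \<bind> (\<lambda>\<omega>. distr (\<kappa> k (restrict (W \<omega>) {..<k})) borel
                      (\<lambda>Wk. epred A B K (x \<omega> k - z \<omega> k) Wk i))"
proof -
  define g where "g = (\<lambda>(p, q). epred A B K (epred A B K 0 p k) q i)"
  have error: "x \<omega> j - z \<omega> j = epred A B K 0 (W \<omega>) j" if "\<omega> \<in> space M" "j \<le> Nbar" for \<omega> j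
    using init[OF that(1)] dyn[OF that(1)] that(2) by (intro closed_loop_error_eq_epred) auto
  have "k \<le> Nbar"
    using \<open>k + N \<le> Nbar\<close> by simp
  have "x \<omega> (k + i) - z \<omega> (k + i)
      = g (restrict (W \<omega>) {..<k}, restrict (\<lambda>j. W \<omega> (k + j)) {..N})" if "\<omega> \<in> space M" for \<omega>
  proof -
    have "{..<i} \<subseteq> {..N}"
      using \<open>i \<le> N\<close> by auto
    then show ?thesis
      using error[OF that, of "k + i"] \<open>k + N \<le> Nbar\<close> \<open>i \<le> N\<close>
      by (simp add: g_def epred_add)
  qed
  then have "distr M borel (\<lambda>\<omega>. x \<omega> (k + i) - z \<omega> (k + i))
      = distr M borel (\<lambda>\<omega>. g (restrict (W \<omega>) {..<k}, restrict (\<lambda>j. W \<omega> (k + j)) {..N}))"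
    by (simp cong: distr_cong)
  also have "\<dots> = M \<bind> (\<lambda>\<omega>. distr (\<kappa> k (restrict (W \<omega>) {..<k})) borel
                      (\<lambda>q. g (restrict (W \<omega>) {..<k}, q)))"
  proof (rule distr_eq_bind_kernel[OF _ _ _ _ cond_distr[OF \<open>k + N \<le> Nbar\<close>]])
    show "space M \<noteq> {}"
      using \<open>prob_space M\<close> by (rule prob_space.not_empty)
    show "\<kappa> k \<in> measurable (PiM {..<k} (\<lambda>_. borel)) (subprob_algebra (PiM {..N} (\<lambda>_. borel)))"
      using kernel[OF \<open>k + N \<le> Nbar\<close>] by (rule measurable_prob_algebraD)
    show "g \<in> borel_measurable (PiM {..<k} (\<lambda>_. borel) \<Otimes>\<^sub>M PiM {..N} (\<lambda>_. borel))"
      unfolding g_def case_prod_beta' using \<open>i \<le> N\<close>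
      by (intro borel_measurable_epred) (auto intro!: measurable_compose[OF measurable_fst]
          measurable_compose[OF measurable_snd] measurable_component_singleton)
  qed (auto intro!: measurable_restrict W_meas)
  also have "\<dots> = M \<bind> (\<lambda>\<omega>. distr (\<kappa> k (restrict (W \<omega>) {..<k})) borel
                      (\<lambda>Wk. epred A B K (x \<omega> k - z \<omega> k) Wk i))"
    by (intro bind_cong distr_cong) (simp_all add: g_def error \<open>k \<le> Nbar\<close>)
  finally show ?thesis .
qed

end
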